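(* Consider Algorithm MWHVC (described in the context) run on a hypergraph $G=(V,E)$ of rank $f$ with nonnegative vertex weights $w$, with parameters $\varepsilon\in(0,1]$, $\beta=\varepsilon/(f+\varepsilon)$ and multiplier $\alpha>1$. For every vertex $v$, the number of $v$-stuck iterations is at most $\alpha/\beta$.
   Context: Let $G=(V,E)$ be a hypergraph: each hyperedge is a nonempty subset of $V$ of size at most $f$ (rank $f$). Vertices have nonnegative weights $w(v)$. For $v\in V$, $E(v)=\{e\in E: v\in e\}$; $\Delta=\max_v |E(v)|\ge 3$. A hyperedge $e$ is covered by $C\subseteq V$ if $e\cap C\neq\emptyset$. The computation is distributed in synchronous rounds on the bipartite network with node set $V\cup E$ and a link between $v$ and $e$ iff $v\in e$. Parameters: $\varepsilon\in(0,1]$, $\beta=\varepsilon/(f+\varepsilon)$, and a multiplier $\alpha>1$. Algorithm MWHVC: Initialize $C\gets\emptyset$ and $E'(v)\gets E(v)$ for every $v$. Iteration $0$: every hyperedge $e$ sets $\mathrm{deal}_0(e)=\beta\cdot\min_{v\in e} w(v)/|E(v)|$ and $\delta_0(e)=\mathrm{deal}_0(e)$. For $i=1,2,\dots$: (a) every vertex $v\notin C$ (not terminated) checks whether $\sum_{e\in E(v)}\delta_{i-1}(e)\ge(1-\beta)w(v)$; if so, $v$ joins $C$, tells every $e\in E'(v)$ that $e$ is covered, and terminates. (b) Every uncovered hyperedge that receives such a message becomes covered, informs all its vertices, and terminates. (c) Every vertex $v\notin C$ that is told $e$ is covered sets $E'(v)\gets E'(v)\setminus\{e\}$; if $E'(v)=\emptyset$,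 $v$ terminates without joining $C$. (d) Every vertex $v\notin C$ sends "raise" to all $e\in E'(v)$ if $\sum_{e\in E'(v)}\mathrm{deal}_{i-1}(e)\le(\beta/\alpha)w(v)$, and otherwise sends "stuck" to all $e\in E'(v)$. (e) Every uncovered hyperedge $e$ sets $\mathrm{deal}_i(e)=\mathrm{deal}_{i-1}(e)$ if it received some "stuck" message, and $\mathrm{deal}_i(e)=\alpha\cdot\mathrm{deal}_{i-1}(e)$ otherwise, and $\delta_i(e)=\delta_{i-1}(e)+\mathrm{deal}_i(e)$. An iteration $i$ is a $v$-stuck iteration if $v$ sends the message "stuck" in step (d) of iteration $i$. *)

theory Defs
  imports Complex_Main
begin

definition incE :: "'v set set \<Rightarrow> 'v \<Rightarrow> 'v set set" where
  "incE E v = {e \<in> E. v \<in> e}"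

record 'v mwhvc_state =
  cover :: "'v set"
  terminated :: "'v set"
  covered :: "'v set set"
  Ep :: "'v \<Rightarrow> 'v set set"
  deal :: "'v set \<Rightarrow> real"
  delta :: "'v set \<Rightarrow> real"

definition init_state :: "'v set set \<Rightarrow> ('v \<Rightarrow> real) \<Rightarrow> real \<Rightarrow> 'v mwhvc_state" where
  "init_state E w \<beta> =
     (let d = (\<lambda>e. \<beta> * Min ((\<lambda>v. w v / real (card (incE E v))) ` e)) in
     \<lparr> cover = {}, terminated = {}, covered = {}, Ep = incE E, deal = d, delta = d \<rparr>)"

definition joiners :: "'v set \<Rightarrow> 'v set set \<Rightarrow> ('v \<Rightarrow> real) \<Rightarrow> real \<Rightarrow> 'v mwhvc_state \<Rightarrow> 'v set" where
  "joiners V E w \<beta> s =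
     {v \<in> V. v \<notin> terminated s \<and> (\<Sum>e\<in>incE E v. delta s e) \<ge> (1 - \<beta>) * w v}"

definition newcov :: "'v set \<Rightarrow> 'v set set \<Rightarrow> ('v \<Rightarrow> real) \<Rightarrow> real \<Rightarrow> 'v mwhvc_state \<Rightarrow> 'v set set" where
  "newcov V E w \<beta> s =
     {e \<in> E. e \<notin> covered s \<and> (\<exists>u \<in> joiners V E w \<beta> s. e \<in> Ep s u)}"

definition Ep_c :: "'v set \<Rightarrow> 'v set set \<Rightarrow> ('v \<Rightarrow> real) \<Rightarrow> real \<Rightarrow> 'v mwhvc_state \<Rightarrow> 'v \<Rightarrow> 'v set set" where
  "Ep_c V E w \<beta> s v =
     (if v \<in> terminated s \<or> v \<in> joiners V E w \<beta> s then Ep s v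
      else Ep s v - newcov V E w \<beta> s)"

definition term_c :: "'v set \<Rightarrow> 'v set set \<Rightarrow> ('v \<Rightarrow> real) \<Rightarrow> real \<Rightarrow> 'v mwhvc_state \<Rightarrow> 'v set" where
  "term_c V E w \<beta> s =
     terminated s \<union> joiners V E w \<beta> s \<union>
     {v \<in> V. v \<notin> terminated s \<and> v \<notin> joiners V E w \<beta> s \<and>
            (\<exists>e \<in> newcov V E w \<beta> s. v \<in> e) \<and> Ep_c V E w \<beta> s v = {}}"

definition stuck_set :: "'v set \<Rightarrow> 'v set set \<Rightarrow> ('v \<Rightarrow> real) \<Rightarrow> real \<Rightarrow> real \<Rightarrow> 'v mwhvc_state \<Rightarrow> 'v set" where
  "stuck_set V E w \<beta> \<alpha> s =
     {v \<in> V. v \<notin> term_c V E w \<beta> s \<and>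
            (\<Sum>e\<in>Ep_c V E w \<beta> s v. deal s e) > (\<beta> / \<alpha>) * w v}"

definition mwhvc_step :: "'v set \<Rightarrow> 'v set set \<Rightarrow> ('v \<Rightarrow> real) \<Rightarrow> real \<Rightarrow> real \<Rightarrow> 'v mwhvc_state \<Rightarrow> 'v mwhvc_state" where
  "mwhvc_step V E w \<beta> \<alpha> s =
     (let J = joiners V E w \<beta> s;
          Cov = covered s \<union> newcov V E w \<beta> s;
          S = stuck_set V E w \<beta> \<alpha> s;
          Epc = Ep_c V E w \<beta> s;
          d = (\<lambda>e. if e \<in> E \<and> e \<notin> Cov then
                      (if (\<exists>v \<in> S. e \<in> Epc v) then deal s e else \<alpha> * deal s e)
                    else deal s e);
          dl = (\<lambda>e. if e \<in> E \<and> e \<notin> Cov then delta s e + d e else delta s e)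
      in \<lparr> cover = cover s \<union> J, terminated = term_c V E w \<beta> s, covered = Cov,
           Ep = Epc, deal = d, delta = dl \<rparr>)"

fun state_after :: "'v set \<Rightarrow> 'v set set \<Rightarrow> ('v \<Rightarrow> real) \<Rightarrow> real \<Rightarrow> real \<Rightarrow> nat \<Rightarrow> 'v mwhvc_state" where
  "state_after V E w \<beta> \<alpha> 0 = init_state E w \<beta>"
| "state_after V E w \<beta> \<alpha> (Suc i) = mwhvc_step V E w \<beta> \<alpha> (state_after V E w \<beta> \<alpha> i)"

definition stuck_iteration :: "'v set \<Rightarrow> 'v set set \<Rightarrow> ('v \<Rightarrow> real) \<Rightarrow> real \<Rightarrow> real \<Rightarrow> 'v \<Rightarrow> nat \<Rightarrow> bool" where
  "stuck_iteration V E w \<beta> \<alpha> v i \<longleftrightarrow>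
     i \<ge> 1 \<and> v \<in> stuck_set V E w \<beta> \<alpha> (state_after V E w \<beta> \<alpha> (i - 1))"

end

theory Submission
  imports Defs
begin

text \<open>The potential of \<open>v\<close> is \<open>\<Sum>e\<in>E(v). \<delta>(e)\<close>. It never decreases, and in a
  \<open>v\<close>-stuck iteration it grows by the total deal of the uncovered hyperedges at \<open>v\<close>, which
  exceeds \<open>(\<beta>/\<alpha>) w(v)\<close>. On the other hand, \<open>v\<close> can only be stuck while its potential is
  still below the joining threshold \<open>(1 - \<beta>) w(v)\<close>. Hence before the last stuck iteration
  there are fewer than \<open>\<alpha>(1 - \<beta>)/\<beta>\<close> stuck iterations, and altogether at most \<open>\<alpha>/\<beta>\<close>.
  Only \<open>\<beta> > 0\<close> and \<open>\<alpha> \<ge> 1\<close> matter.\<close>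

definition mwhvc_inv :: "'v set set \<Rightarrow> 'v mwhvc_state \<Rightarrow> bool" where
  "mwhvc_inv E s \<longleftrightarrow>
     (\<forall>e\<in>E. 0 \<le> deal s e) \<and> (\<forall>u. Ep s u \<subseteq> incE E u) \<and>
     (\<forall>u. u \<notin> terminated s \<longrightarrow> Ep s u \<inter> covered s = {})"

lemma mwhvc_inv_init_state:
  assumes "\<forall>e\<in>E. e \<noteq> {} \<and> finite e" and "\<forall>e\<in>E. \<forall>u\<in>e. 0 \<le> w u" and "0 \<le> \<beta>"
  shows "mwhvc_inv E (init_state E w \<beta>)"
proof -
  have "0 \<le> Min ((\<lambda>u. w u / real (card (incE E u))) ` e)" if "e \<in> E" for e
    using assms that by (subst Min_ge_iff) auto
  then show ?thesis
    using assms(3) by (simp add: mwhvc_inv_def init_state_def Let_def)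
qed

lemma mwhvc_inv_step:
  assumes "mwhvc_inv E s" and "0 \<le> \<alpha>"
  shows "mwhvc_inv E (mwhvc_step V E w \<beta> \<alpha> s)"
  using assms
  by (auto simp: mwhvc_inv_def mwhvc_step_def Let_def Ep_c_def term_c_def)

lemma mwhvc_inv_state_after:
  assumes "mwhvc_inv E (init_state E w \<beta>)" and "0 \<le> \<alpha>"
  shows "mwhvc_inv E (state_after V E w \<beta> \<alpha> n)"
  by (induction n) (use assms mwhvc_inv_step in auto)

lemma delta_step_mono:
  assumes "mwhvc_inv E s" and "0 \<le> \<alpha>" and "e \<in> E"
  shows "delta s e \<le> delta (mwhvc_step V E w \<beta> \<alpha> s) e"
  using assms by (auto simp: mwhvc_inv_def mwhvc_step_def Let_def)

lemma stuck_below_join_threshold: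
  assumes "v \<in> stuck_set V E w \<beta> \<alpha> s"
  shows "(\<Sum>e\<in>incE E v. delta s e) < (1 - \<beta>) * w v"
  using assms by (auto simp: stuck_set_def term_c_def joiners_def)

text \<open>A stuck vertex has neither terminated nor joined \<open>C\<close>, so every hyperedge of its
  current \<open>E'(v)\<close> is still uncovered after step (b) and adds at least its deal to \<open>\<delta>\<close>.\<close>

lemma potential_step_stuck:
  assumes "finite E" and inv: "mwhvc_inv E s" and "1 \<le> \<alpha>"
    and stuck: "v \<in> stuck_set V E w \<beta> \<alpha> s"
  shows "(\<Sum>e\<in>incE E v. delta s e) + \<beta> / \<alpha> * w v
         < (\<Sum>e\<in>incE E v. delta (mwhvc_step V E w \<beta> \<alpha> s) e)"
proof -
  let ?s' = "mwhvc_step V E w \<beta> \<alpha> s"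
  let ?A = "Ep_c V E w \<beta> s v"
  have active: "v \<notin> terminated s" "v \<notin> joiners V E w \<beta> s"
    using stuck by (auto simp: stuck_set_def term_c_def)
  then have A_eq: "?A = Ep s v - newcov V E w \<beta> s"
    by (simp add: Ep_c_def)
  have A_sub: "?A \<subseteq> incE E v"
    using inv A_eq by (auto simp: mwhvc_inv_def)
  have fin: "finite (incE E v)"
    using \<open>finite E\<close> by (simp add: incE_def)
  have raised: "delta s e + deal s e \<le> delta ?s' e" if "e \<in> ?A" for e
  proof -
    have "e \<in> E" "e \<notin> covered s" "e \<notin> newcov V E w \<beta> s" "0 \<le> deal s e"
      using that A_eq A_sub inv active by (auto simp: mwhvc_inv_def incE_def)
    moreover have "deal s e \<le> \<alpha> * deal s e"
      using \<open>1 \<le> \<alpha>\<close> \<open>0 \<le> deal s e\<close> by (simp add: mult_le_cancel_right1)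
    ultimately show ?thesis
      by (auto simp: mwhvc_step_def Let_def)
  qed
  have rest: "delta s e \<le> delta ?s' e" if "e \<in> incE E v - ?A" for e
    using delta_step_mono[OF inv] that \<open>1 \<le> \<alpha>\<close> by (simp add: incE_def)
  have raised_sum: "(\<Sum>e\<in>?A. delta s e) + (\<Sum>e\<in>?A. deal s e) \<le> (\<Sum>e\<in>?A. delta ?s' e)"
    using sum_mono[of ?A "\<lambda>e. delta s e + deal s e", OF raised] by (simp add: sum.distrib)
  have rest_sum: "(\<Sum>e\<in>incE E v - ?A. delta s e) \<le> (\<Sum>e\<in>incE E v - ?A. delta ?s' e)"
    using sum_mono[of "incE E v - ?A", OF rest] by simp
  have "(\<Sum>e\<in>incE E v. delta s e) + \<beta> / \<alpha> * w v
        < (\<Sum>e\<in>?A. delta s e) + (\<Sum>e\<in>incE E v - ?A. delta s e) + (\<Sum>e\<in>?A. deal s e)"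
    using stuck sum.subset_diff[OF A_sub fin, of "delta s"] by (simp add: stuck_set_def)
  also have "\<dots> \<le> (\<Sum>e\<in>?A. delta ?s' e) + (\<Sum>e\<in>incE E v - ?A. delta ?s' e)"
    using raised_sum rest_sum by linarith
  also have "\<dots> = (\<Sum>e\<in>incE E v. delta ?s' e)"
    using sum.subset_diff[OF A_sub fin, of "delta ?s'"] by simp
  finally show ?thesis .
qed

lemma lower_bound_by_jumps:
  fixes D :: "nat \<Rightarrow> real"
  assumes "\<And>n. D n \<le> D (Suc n)" and "\<And>n. Suc n \<in> S \<Longrightarrow> D n + c \<le> D (Suc n)"
  shows "D 0 + c * card (S \<inter> {1..n}) \<le> D n"
proof (induction n)
  case 0
  then show ?case by simp
next
  case (Suc n)
  show ?case
  proof (cases "Suc n \<in> S")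
    case True
    then have "S \<inter> {1..Suc n} = insert (Suc n) (S \<inter> {1..n})"
      by (auto simp: le_Suc_eq)
    then show ?thesis
      using Suc assms(2)[OF True] by (simp add: algebra_simps)
  next
    case False
    then have "S \<inter> {1..Suc n} = S \<inter> {1..n}"
      by (auto simp: le_Suc_eq)
    then show ?thesis
      using Suc assms(1)[of n] by simp
  qed
qed

lemma finite_card_le_if_card_before_le:
  fixes P :: "nat \<Rightarrow> bool" and K :: real
  assumes "0 \<le> K" and "\<And>i. P i \<Longrightarrow> real (card {j. P j \<and> j < i}) + 1 \<le> K"
  shows "finite {i. P i} \<and> card {i. P i} \<le> K"
proof -
  have bounded: "card B \<le> K" if "finite B" "B \<subseteq> {i. P i}" for B
  proof (cases "B = {}")
    case True
    then show ?thesis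
      using \<open>0 \<le> K\<close> by simp
  next
    case False
    let ?i = "Max B"
    have "P ?i"
      using that False Max_in by blast
    have "finite {j. P j \<and> j < ?i}"
      by (rule finite_subset[of _ "{..<?i}"]) auto
    moreover have "B \<subseteq> insert ?i {j. P j \<and> j < ?i}"
    proof
      fix x assume "x \<in> B"
      then have "x \<le> ?i" and "P x"
        using that by auto
      then show "x \<in> insert ?i {j. P j \<and> j < ?i}"
        by auto
    qed
    ultimately have "card B \<le> Suc (card {j. P j \<and> j < ?i})"
      using card_mono[of "insert ?i {j. P j \<and> j < ?i}" B] by (simp add: card_insert_if)
    then show ?thesis
      using assms(2)[OF \<open>P ?i\<close>] by linarith
  qed
  have "finite {i. P i}"
  proof (rule ccontr)
    assume "infinite {i. P i}"
    then obtain B where "finite B" "B \<subseteq> {i. P i}" "card B = nat \<lceil>K\<rceil> + 1"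
      using infinite_arbitrarily_large by blast
    then show False
      using bounded[of B] real_nat_ceiling_ge[of K] by simp
  qed
  then show ?thesis
    using bounded by blast
qed

lemma stuck_iterations_before:
  assumes "finite V" and "\<forall>e\<in>E. e \<noteq> {} \<and> e \<subseteq> V" and "\<forall>u\<in>V. 0 \<le> w u"
    and "0 \<le> \<beta>" and "1 \<le> \<alpha>"
    and "stuck_iteration V E w \<beta> \<alpha> v i"
  shows "\<beta> / \<alpha> * w v * card {j. stuck_iteration V E w \<beta> \<alpha> v j \<and> j < i} < (1 - \<beta>) * w v"
proof -
  have "E \<subseteq> Pow V"
    using assms(2) by auto
  then have "finite E"
    using \<open>finite V\<close> finite_subset by blast
  have edges: "\<forall>e\<in>E. e \<noteq> {} \<and> finite e" "\<forall>e\<in>E. \<forall>u\<in>e. 0 \<le> w u"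
    using assms(1-3) finite_subset by blast+
  let ?st = "state_after V E w \<beta> \<alpha>"
  define S where "S = {j. stuck_iteration V E w \<beta> \<alpha> v j}"
  define D where "D n = (\<Sum>e\<in>incE E v. delta (?st n) e)" for n
  have inv: "mwhvc_inv E (?st n)" for n
    using mwhvc_inv_state_after[OF mwhvc_inv_init_state[OF edges \<open>0 \<le> \<beta>\<close>]] \<open>1 \<le> \<alpha>\<close>
    by simp
  have "D n \<le> D (Suc n)" for n
    unfolding D_def using delta_step_mono[OF inv] \<open>1 \<le> \<alpha>\<close>
    by (auto simp: incE_def intro!: sum_mono)
  moreover have "D n + \<beta> / \<alpha> * w v \<le> D (Suc n)" if "Suc n \<in> S" for n
  proof -
    have "v \<in> stuck_set V E w \<beta> \<alpha> (?st n)"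
      using that by (simp add: S_def stuck_iteration_def)
    from potential_step_stuck[OF \<open>finite E\<close> inv \<open>1 \<le> \<alpha>\<close> this]
    show ?thesis
      by (simp add: D_def)
  qed
  ultimately have lower: "D 0 + \<beta> / \<alpha> * w v * card (S \<inter> {1..n}) \<le> D n" for n
    by (rule lower_bound_by_jumps)
  have "0 \<le> D 0"
    using inv[of 0] unfolding D_def mwhvc_inv_def incE_def
    by (auto simp: init_state_def Let_def intro: sum_nonneg)
  obtain n where "i = Suc n"
    using \<open>stuck_iteration V E w \<beta> \<alpha> v i\<close> by (cases i) (auto simp: stuck_iteration_def)
  then have stuck: "v \<in> stuck_set V E w \<beta> \<alpha> (?st n)"
    using \<open>stuck_iteration V E w \<beta> \<alpha> v i\<close> by (simp add: stuck_iteration_def)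
  have "{j. stuck_iteration V E w \<beta> \<alpha> v j \<and> j < i} = S \<inter> {1..n}"
    using \<open>i = Suc n\<close> by (auto simp: S_def stuck_iteration_def)
  moreover have "D n < (1 - \<beta>) * w v"
    using stuck_below_join_threshold[OF stuck] by (simp add: D_def)
  ultimately show ?thesis
    using lower[of n] \<open>0 \<le> D 0\<close> by simp
qed

theorem mainTheorem5:
  fixes V :: "'v set" and E :: "'v set set" and w :: "'v \<Rightarrow> real"
    and f :: nat and \<epsilon> \<alpha> \<beta> :: real and v :: 'v
  assumes "finite V"
    and "\<forall>e \<in> E. e \<noteq> {} \<and> e \<subseteq> V \<and> card e \<le> f"
    and "\<forall>u \<in> V. w u \<ge> 0"
    and "\<exists>u \<in> V. card (incE E u) \<ge> 3"
    and "0 < \<epsilon>" and "\<epsilon> \<le> 1"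
    and "\<beta> = \<epsilon> / (real f + \<epsilon>)"
    and "\<alpha> > 1"
    and "v \<in> V"
  shows "finite {i. stuck_iteration V E w \<beta> \<alpha> v i}
       \<and> real (card {i. stuck_iteration V E w \<beta> \<alpha> v i}) \<le> \<alpha> / \<beta>"
proof (rule finite_card_le_if_card_before_le)
  have "0 < \<beta>"
    using assms(5,7) by (simp add: add_nonneg_pos)
  then show "0 \<le> \<alpha> / \<beta>"
    using \<open>\<alpha> > 1\<close> by simp
  fix i assume "stuck_iteration V E w \<beta> \<alpha> v i"
  let ?k = "real (card {j. stuck_iteration V E w \<beta> \<alpha> v j \<and> j < i})"
  have "\<beta> / \<alpha> * w v * ?k < (1 - \<beta>) * w v"
    using stuck_iterations_before[OF \<open>finite V\<close> _ \<open>\<forall>u\<in>V. 0 \<le> w u\<close>]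
      assms(2) \<open>0 < \<beta>\<close> \<open>\<alpha> > 1\<close> \<open>stuck_iteration V E w \<beta> \<alpha> v i\<close> by simp
  then have "\<beta> / \<alpha> * ?k * w v < (1 - \<beta>) * w v"
    by (simp add: ac_simps)
  moreover have "0 < w v"
    using calculation assms(3,9) by (cases "w v = 0") auto
  ultimately have "\<beta> / \<alpha> * ?k < 1 - \<beta>"
    using mult_less_cancel_right_pos by blast
  then have "\<beta> * (?k + 1) < \<alpha> - (\<alpha> - 1) * \<beta>"
    using \<open>\<alpha> > 1\<close> by (simp add: field_simps)
  also have "\<dots> < \<alpha>"
    using \<open>0 < \<beta>\<close> \<open>\<alpha> > 1\<close> by simp
  finally show "?k + 1 \<le> \<alpha> / \<beta>"
    using \<open>0 < \<beta>\<close> by (simp add: field_simps)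
qed

end
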